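(* Let $F\subseteq\mathbb{R}^2$ be a self-similar set generated by an IFS $\Phi$ of contracting similarities satisfying the strong separation condition. Then $\dim_H(F\cap L)<1$ for every affine line $L\subseteq\mathbb{R}^2$.
   Context: SSC: the first-level cylinders $\phi_i(F)$ are pairwise disjoint. *)

theory Defs
  imports "HOL-Analysis.Analysis"
begin

text \<open>Contribution of a covering set to the s-dimensional Hausdorff sum,
  with the usual conventions: the empty set contributes 0, and for s = 0 every
  nonempty set contributes 1 (i.e. 0^0 = 1).\<close>
definition diam_pow :: "real \<Rightarrow> ('a::metric_space) set \<Rightarrow> ennreal" where
  "diam_pow s U = (if U = {} then 0 else if s = 0 then 1 else ennreal (diameter U powr s))"

definition hausdorff_pre :: "real \<Rightarrow> real \<Rightarrow> ('a::metric_space) set \<Rightarrow> ennreal" where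
  "hausdorff_pre s \<delta> A =
     (INF U \<in> {U :: nat \<Rightarrow> 'a set. A \<subseteq> (\<Union>i. U i) \<and> (\<forall>i. bounded (U i) \<and> diameter (U i) \<le> \<delta>)}.
        (\<Sum>i. diam_pow s (U i)))"

definition hausdorff_measure :: "real \<Rightarrow> ('a::metric_space) set \<Rightarrow> ennreal" where
  "hausdorff_measure s A = (SUP \<delta> \<in> {0<..}. hausdorff_pre s \<delta> A)"

definition hausdorff_dim :: "('a::metric_space) set \<Rightarrow> real" where
  "hausdorff_dim A = Inf {s. 0 \<le> s \<and> hausdorff_measure s A = 0}"

definition contracting_similarity :: "('a::metric_space \<Rightarrow> 'a) \<Rightarrow> bool" where
  "contracting_similarity f \<longleftrightarrow>
     (\<exists>r. 0 < r \<and> r < 1 \<and> (\<forall>x y. dist (f x) (f y) = r * dist x y))"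

definition self_similar_set :: "nat \<Rightarrow> (nat \<Rightarrow> 'a::metric_space \<Rightarrow> 'a) \<Rightarrow> 'a set \<Rightarrow> bool" where
  "self_similar_set m \<phi> F \<longleftrightarrow>
     F \<noteq> {} \<and> compact F \<and> F = (\<Union>i<m. \<phi> i ` F)"

definition SSC :: "nat \<Rightarrow> (nat \<Rightarrow> 'a \<Rightarrow> 'a) \<Rightarrow> 'a set \<Rightarrow> bool" where
  "SSC m \<phi> F \<longleftrightarrow> (\<forall>i<m. \<forall>j<m. i \<noteq> j \<longrightarrow> \<phi> i ` F \<inter> \<phi> j ` F = {})"

definition affine_line :: "('a::real_vector) set \<Rightarrow> bool" where
  "affine_line L \<longleftrightarrow> (\<exists>a v. v \<noteq> 0 \<and> L = {a + t *\<^sub>R v | t. True})"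

end

theory Submission
  imports Defs
begin

text \<open>
  Under the strong separation condition the attractor F is totally disconnected, so it
  contains no nondegenerate segment. By compactness there is a K such that every segment
  whose length lies in a fixed range has one of its K equal pieces disjoint from F. A short
  segment meeting F lies, together with the part of F near it, in a single cylinder of
  comparable size, and the cylinder map transports the missing piece to that scale: F is
  uniformly porous along segments. Hence at most M (K - 1)^n of the M K^n equal pieces of a
  segment meet F, and covering F \<inter> L by them gives
  dim (F \<inter> L) \<le> log (K - 1/2) / log K < 1.
\<close>

section \<open>Similarities and segments\<close>

lemma similarity_minus_const_linear:
  fixes f :: "'a::real_inner \<Rightarrow> 'a"
  assumes "\<And>x y. dist (f x) (f y) = c * dist x y"
  shows "linear (\<lambda>x. f x - f 0)"
  by (rule scaling_linear[where c = c]) (simp_all add: assms[unfolded dist_norm] dist_norm)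

lemma similarity_linepath:
  fixes f :: "'a::real_inner \<Rightarrow> 'a"
  assumes "\<And>x y. dist (f x) (f y) = c * dist x y"
  shows "f (linepath a b t) = linepath (f a) (f b) t"
proof -
  interpret linear "\<lambda>x. f x - f 0"
    using similarity_minus_const_linear[OF assms] .
  have "f (linepath a b t) - f 0 = (1 - t) *\<^sub>R (f a - f 0) + t *\<^sub>R (f b - f 0)"
    unfolding linepath_def using add scale by metis
  then show ?thesis
    by (simp add: linepath_def algebra_simps)
qed

lemma similarity_inj:
  assumes "0 < c" "\<And>x y. dist (f x) (f y) = c * dist x y"
  shows "inj f"
  by (rule injI) (use assms in \<open>metis dist_eq_0_iff mult_eq_0_iff less_irrefl\<close>)

lemma similarity_surj:
  fixes f :: "'a::euclidean_space \<Rightarrow> 'a"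
  assumes "0 < c" "\<And>x y. dist (f x) (f y) = c * dist x y"
  shows "surj f"
proof -
  let ?g = "\<lambda>x. f x - f 0"
  have "linear ?g"
    using similarity_minus_const_linear assms(2) .
  moreover have "inj ?g"
    using similarity_inj[OF assms] by (simp add: inj_on_def)
  ultimately have "surj ?g"
    using linear_injective_imp_surjective by blast
  then show ?thesis
    by (metis (no_types, lifting) diff_add_cancel surj_def)
qed

lemma linepath_linepath:
  "linepath (linepath a b u) (linepath a b v) s = linepath a b (u + s * (v - u))"
  by (simp add: linepath_def algebra_simps)

lemma dist_linepath: "dist (linepath a b s) (linepath a b t) = \<bar>s - t\<bar> * dist a b"
proof -
  have "linepath a b s - linepath a b t = (s - t) *\<^sub>R (b - a)"
    by (simp add: linepath_def algebra_simps)
  then show ?thesis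
    by (simp add: dist_norm norm_minus_commute)
qed

lemma dist_in_closed_segment_le:
  fixes a b :: "'a::real_normed_vector"
  assumes "x \<in> closed_segment a b" "y \<in> closed_segment a b"
  shows "dist x y \<le> dist a b"
proof -
  obtain s t where "s \<in> {0..1}" "t \<in> {0..1}" "x = linepath a b s" "y = linepath a b t"
    using assms unfolding linepath_image_01[symmetric] by blast
  then show ?thesis
    by (simp add: dist_linepath mult_left_le_one_le abs_le_iff)
qed

definition piece :: "'a::real_normed_vector \<Rightarrow> 'a \<Rightarrow> nat \<Rightarrow> nat \<Rightarrow> 'a set" where
  "piece a b N j = closed_segment (linepath a b (j / N)) (linepath a b (Suc j / N))"

lemma piece_subset_segment:
  assumes "j < N"
  shows "piece a b N j \<subseteq> closed_segment a b"
  unfolding piece_def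
  using assms by (intro closed_segment_subset linepath_in_path) (auto simp: field_simps)

lemma bounded_piece: "bounded (piece a b N j)"
  by (simp add: piece_def bounded_closed_segment)

lemma diameter_piece: "diameter (piece a b N j) \<le> dist a b / N"
proof (rule diameter_le)
  have "dist (linepath a b (j / N)) (linepath a b (Suc j / N)) = dist a b / N"
    by (cases "N = 0") (simp_all add: dist_linepath field_simps)
  then show "\<And>x y. x \<in> piece a b N j \<Longrightarrow> y \<in> piece a b N j \<Longrightarrow> norm (x - y) \<le> dist a b / N"
    unfolding piece_def by (metis dist_in_closed_segment_le dist_norm)
qed simp

lemma segment_subset_pieces:
  assumes "0 < N"
  shows "closed_segment a b \<subseteq> (\<Union>j<N. piece a b N j)"
proof
  fix x assume "x \<in> closed_segment a b"
  then obtain t where t: "0 \<le> t" "t \<le> 1" "x = linepath a b t"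
    unfolding linepath_image_01[symmetric] by auto
  define j where "j = min (nat \<lfloor>t * N\<rfloor>) (N - 1)"
  have "j < N" "real j \<le> t * N" "t * N \<le> Suc j"
    unfolding j_def using assms t(1,2) by (auto simp: min_def) linarith+
  then have s: "0 \<le> t * N - j" "t * N - j \<le> 1"
    by auto
  have "x = linepath (linepath a b (j / N)) (linepath a b (Suc j / N)) (t * N - j)"
    using assms by (simp add: t(3) linepath_linepath field_simps)
  then have "x \<in> piece a b N j"
    unfolding piece_def linepath_image_01[symmetric] using s by auto
  then show "x \<in> (\<Union>j<N. piece a b N j)"
    using \<open>j < N\<close> by blast
qed

lemma piece_refine:
  assumes "0 < N" "0 < K"
  shows "piece a b (N * K) (j * K + k) =
    piece (linepath a b (j / N)) (linepath a b (Suc j / N)) K k"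
  using assms by (simp add: piece_def linepath_linepath field_simps)

lemma piece_refine_subset:
  assumes "0 < N" "k < K"
  shows "piece a b (N * K) (j * K + k) \<subseteq> piece a b N j"
proof -
  have "piece a b (N * K) (j * K + k) = piece (linepath a b (j / N)) (linepath a b (Suc j / N)) K k"
    using assms by (intro piece_refine) auto
  also have "\<dots> \<subseteq> closed_segment (linepath a b (j / N)) (linepath a b (Suc j / N))"
    using assms(2) by (rule piece_subset_segment)
  finally show ?thesis
    unfolding piece_def .
qed

lemma similarity_image_piece:
  fixes f :: "'a::real_inner \<Rightarrow> 'a"
  assumes "\<And>x y. dist (f x) (f y) = c * dist x y"
  shows "f ` piece a b N j = piece (f a) (f b) N j"
  unfolding piece_def linepath_image_01[symmetric] image_image
  by (simp add: similarity_linepath[OF assms])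

lemma bounded_inter_affine_line_subset_segment:
  fixes S :: "'a::real_normed_vector set"
  assumes "bounded S" "affine_line L"
  obtains a b where "a \<noteq> b" "S \<inter> L \<subseteq> closed_segment a b"
proof -
  obtain p v where "v \<noteq> 0" and L: "L = {p + t *\<^sub>R v | t. True}"
    using assms(2) unfolding affine_line_def by blast
  obtain R where R: "\<And>x. x \<in> S \<Longrightarrow> norm x \<le> R"
    using assms(1) unfolding bounded_iff by blast
  define T where "T = (\<bar>R\<bar> + norm p) / norm v + 1"
  have "0 < T"
    unfolding T_def by (simp add: add_nonneg_pos)
  have "S \<inter> L \<subseteq> closed_segment (p - T *\<^sub>R v) (p + T *\<^sub>R v)"
  proof
    fix x assume x: "x \<in> S \<inter> L"
    then obtain t where t: "x = p + t *\<^sub>R v"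
      using L by blast
    have "\<bar>t\<bar> * norm v \<le> norm x + norm p"
      using norm_triangle_ineq4[of x p] by (simp add: t)
    also have "\<dots> \<le> \<bar>R\<bar> + norm p"
      using R x by force
    finally have "\<bar>t\<bar> \<le> (\<bar>R\<bar> + norm p) / norm v"
      using \<open>v \<noteq> 0\<close> by (simp add: pos_le_divide_eq)
    then have "\<bar>t\<bar> < T"
      unfolding T_def by linarith
    define u where "u = (t + T) / (2 * T)"
    have "0 \<le> u" "u \<le> 1" "x = (1 - u) *\<^sub>R (p - T *\<^sub>R v) + u *\<^sub>R (p + T *\<^sub>R v)"
      unfolding u_def t using \<open>\<bar>t\<bar> < T\<close> \<open>0 < T\<close>
      by (auto simp: field_simps scaleR_left_distrib[symmetric])
    then show "x \<in> closed_segment (p - T *\<^sub>R v) (p + T *\<^sub>R v)"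
      unfolding in_segment by blast
  qed
  moreover have "p - T *\<^sub>R v \<noteq> p + T *\<^sub>R v"
  proof
    assume "p - T *\<^sub>R v = p + T *\<^sub>R v"
    then have "T *\<^sub>R v + T *\<^sub>R v = 0"
      by (simp add: algebra_simps)
    then have "(2::real) = 0 \<or> T *\<^sub>R v = 0"
      by (simp only: scaleR_2[symmetric] scaleR_eq_0_iff)
    then show False
      using \<open>v \<noteq> 0\<close> \<open>0 < T\<close> by simp
  qed
  ultimately show ?thesis
    using that by blast
qed

section \<open>Hausdorff measure via finite covers\<close>

lemma diam_pow_eq: "s \<noteq> 0 \<Longrightarrow> diam_pow s U = ennreal (diameter U powr s)"
  by (simp add: diam_pow_def)

lemma hausdorff_pre_le_finite_cover:
  fixes U :: "nat \<Rightarrow> 'a::metric_space set"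
  assumes "0 < s" "0 < \<delta>" "r \<le> \<delta>" "finite I" "X \<subseteq> (\<Union>i\<in>I. U i)"
    and U: "\<And>i. i \<in> I \<Longrightarrow> bounded (U i) \<and> diameter (U i) \<le> r"
  shows "hausdorff_pre s \<delta> X \<le> ennreal (card I * r powr s)"
proof -
  define V where "V i = (if i \<in> I then U i else {})" for i
  have "\<forall>i. bounded (V i) \<and> diameter (V i) \<le> \<delta>"
    using U assms(2,3) by (force simp: V_def)
  moreover have "X \<subseteq> (\<Union>i. V i)"
    using assms(5) by (auto simp: V_def)
  ultimately have "hausdorff_pre s \<delta> X \<le> (\<Sum>i. diam_pow s (V i))"
    unfolding hausdorff_pre_def by (intro INF_lower) auto
  also have "\<dots> = (\<Sum>i\<in>I. diam_pow s (U i))"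
    using \<open>0 < s\<close> by (subst suminf_finite[OF \<open>finite I\<close>]) (auto simp: V_def diam_pow_def)
  also have "\<dots> \<le> (\<Sum>i\<in>I. ennreal (r powr s))"
  proof (rule sum_mono)
    fix i assume "i \<in> I"
    then have "diameter (U i) powr s \<le> r powr s"
      using U \<open>0 < s\<close> by (intro powr_mono2) (auto intro: diameter_ge_0)
    then show "diam_pow s (U i) \<le> ennreal (r powr s)"
      using \<open>0 < s\<close> by (simp add: diam_pow_eq ennreal_leI)
  qed
  also have "\<dots> = ennreal (card I * r powr s)"
    by (simp add: ennreal_of_nat_eq_real_of_nat ennreal_mult)
  finally show ?thesis .
qed

lemma hausdorff_measure_eq_0_if_covers:
  fixes X :: "'a::metric_space set" and r :: "nat \<Rightarrow> real" and c :: "nat \<Rightarrow> nat"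
  assumes "0 < s" and r: "r \<longlonglongrightarrow> 0" and cr: "(\<lambda>n. c n * r n powr s) \<longlonglongrightarrow> 0"
    and cover: "\<And>n. \<exists>(I :: nat set) U. finite I \<and> card I \<le> c n \<and> X \<subseteq> (\<Union>i\<in>I. U i) \<and>
      (\<forall>i\<in>I. bounded (U i) \<and> diameter (U i) \<le> r n)"
  shows "hausdorff_measure s X = 0"
proof -
  have small: "hausdorff_pre s \<delta> X \<le> ennreal \<epsilon>" if "0 < \<delta>" "0 < \<epsilon>" for \<delta> \<epsilon>
  proof -
    have "\<forall>\<^sub>F n in sequentially. r n < \<delta> \<and> c n * r n powr s < \<epsilon>"
      using order_tendstoD(2)[OF r \<open>0 < \<delta>\<close>] order_tendstoD(2)[OF cr \<open>0 < \<epsilon>\<close>]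
      by (rule eventually_conj)
    then obtain n where n: "r n < \<delta>" "c n * r n powr s < \<epsilon>"
      using eventually_happens' sequentially_bot by blast
    obtain I and U :: "nat \<Rightarrow> 'a set" where I: "finite I" "card I \<le> c n"
      and U: "X \<subseteq> (\<Union>i\<in>I. U i)" "\<And>i. i \<in> I \<Longrightarrow> bounded (U i) \<and> diameter (U i) \<le> r n"
      using cover[of n] by blast
    have "hausdorff_pre s \<delta> X \<le> ennreal (card I * r n powr s)"
      using \<open>0 < s\<close> \<open>0 < \<delta>\<close> n(1) I(1) U by (intro hausdorff_pre_le_finite_cover) auto
    also have "\<dots> \<le> ennreal \<epsilon>"
    proof (rule ennreal_leI)
      have "card I * r n powr s \<le> c n * r n powr s"
        using I(2) by (intro mult_right_mono) auto
      then show "card I * r n powr s \<le> \<epsilon>"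
        using n(2) by linarith
    qed
    finally show ?thesis .
  qed
  have "hausdorff_pre s \<delta> X \<le> 0" if "0 < \<delta>" for \<delta>
    by (rule ennreal_le_epsilon) (simp add: small that)
  then have "(SUP \<delta>\<in>{0<..}. hausdorff_pre s \<delta> X) \<le> 0"
    by (intro SUP_least) simp
  then show ?thesis
    by (simp add: hausdorff_measure_def)
qed

lemma hausdorff_dim_le:
  assumes "0 \<le> s" "hausdorff_measure s X = 0"
  shows "hausdorff_dim X \<le> s"
  unfolding hausdorff_dim_def using assms by (intro cInf_lower bdd_belowI[of _ 0]) simp_all

section \<open>Porosity along segments\<close>

definition segment_porous :: "nat \<Rightarrow> real \<Rightarrow> 'a::real_normed_vector set \<Rightarrow> bool" where
  "segment_porous K \<delta> F \<longleftrightarrow>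
     (\<forall>a b. 0 < dist a b \<longrightarrow> dist a b \<le> \<delta> \<longrightarrow> (\<exists>k<K. piece a b K k \<inter> F = {}))"

definition pieces_meeting :: "'a::real_normed_vector set \<Rightarrow> 'a \<Rightarrow> 'a \<Rightarrow> nat \<Rightarrow> nat set" where
  "pieces_meeting F a b N = {j. j < N \<and> piece a b N j \<inter> F \<noteq> {}}"

lemma finite_pieces_meeting [simp]: "finite (pieces_meeting F a b N)"
  by (simp add: pieces_meeting_def)

lemma card_pieces_meeting_refine:
  assumes por: "segment_porous K \<delta> F" and "0 < K" "0 < N" "a \<noteq> b" "dist a b / N \<le> \<delta>"
  shows "card (pieces_meeting F a b (N * K)) \<le> card (pieces_meeting F a b N) * (K - 1)"
proof -
  define C where "C j = {k. k < K \<and> piece a b (N * K) (j * K + k) \<inter> F \<noteq> {}}" for j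
  have card_C: "card (C j) \<le> K - 1" for j
  proof -
    define p q where "p = linepath a b (j / N)" and "q = linepath a b (Suc j / N)"
    have "dist p q = dist a b / N"
      unfolding p_def q_def dist_linepath using \<open>0 < N\<close> by (simp add: field_simps)
    then have "0 < dist p q" "dist p q \<le> \<delta>"
      using assms(3-5) by auto
    then obtain k0 where "k0 < K" "piece p q K k0 \<inter> F = {}"
      using por unfolding segment_porous_def by blast
    moreover have "piece a b (N * K) (j * K + k0) = piece p q K k0"
      unfolding p_def q_def using \<open>0 < N\<close> \<open>0 < K\<close> by (rule piece_refine)
    ultimately have "C j \<subseteq> {..<K} - {k0}"
      by (auto simp: C_def)
    then have "card (C j) \<le> card ({..<K} - {k0})"
      by (intro card_mono) auto
    then show ?thesis
      using \<open>k0 < K\<close> by simp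
  qed
  have "pieces_meeting F a b (N * K) \<subseteq> (\<Union>j\<in>pieces_meeting F a b N. (\<lambda>k. j * K + k) ` C j)"
  proof
    fix i assume i: "i \<in> pieces_meeting F a b (N * K)"
    have i_eq: "i div K * K + i mod K = i" and "i mod K < K"
      using \<open>0 < K\<close> by simp_all
    then have "piece a b (N * K) i \<subseteq> piece a b N (i div K)"
      using piece_refine_subset[OF \<open>0 < N\<close>] by metis
    moreover have "i div K < N"
      using i by (simp add: pieces_meeting_def less_mult_imp_div_less)
    ultimately have "i div K \<in> pieces_meeting F a b N" "i mod K \<in> C (i div K)"
      using i \<open>i mod K < K\<close> unfolding pieces_meeting_def C_def i_eq by auto
    then show "i \<in> (\<Union>j\<in>pieces_meeting F a b N. (\<lambda>k. j * K + k) ` C j)"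
      using i_eq by (metis UN_I image_eqI)
  qed
  then have "card (pieces_meeting F a b (N * K)) \<le>
      card (\<Union>j\<in>pieces_meeting F a b N. (\<lambda>k. j * K + k) ` C j)"
    by (rule card_mono[rotated]) (simp add: C_def)
  also have "\<dots> \<le> (\<Sum>j\<in>pieces_meeting F a b N. card ((\<lambda>k. j * K + k) ` C j))"
    by (rule card_UN_le) simp
  also have "\<dots> \<le> (\<Sum>j\<in>pieces_meeting F a b N. K - 1)"
    using card_C by (intro sum_mono card_image_le[THEN order_trans]) (auto simp: C_def)
  finally show ?thesis
    by simp
qed

lemma card_pieces_meeting_le:
  assumes "segment_porous K \<delta> F" "0 < K" "0 < M" "a \<noteq> b" "dist a b / M \<le> \<delta>"
  shows "card (pieces_meeting F a b (M * K ^ n)) \<le> M * (K - 1) ^ n"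
proof (induction n)
  case 0
  have "card (pieces_meeting F a b M) \<le> card {..<M}"
    by (rule card_mono) (auto simp: pieces_meeting_def)
  then show ?case
    by simp
next
  case (Suc n)
  have "real M \<le> real M * real K ^ n"
    using assms(2) by (simp add: mult_le_cancel_left1)
  then have "dist a b / (M * K ^ n) \<le> dist a b / M"
    using assms(2,3) by (intro divide_left_mono) simp_all
  then have "dist a b / (M * K ^ n) \<le> \<delta>"
    using assms(5) by (rule order_trans)
  moreover have "0 < M * K ^ n"
    using assms(2,3) by simp
  ultimately have "card (pieces_meeting F a b (M * K ^ n * K)) \<le>
      card (pieces_meeting F a b (M * K ^ n)) * (K - 1)"
    using card_pieces_meeting_refine[OF assms(1,2) _ assms(4)] by simp
  also have "\<dots> \<le> M * (K - 1) ^ n * (K - 1)"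
    using Suc.IH by (rule mult_right_mono) simp
  finally show ?case
    by (metis mult.assoc power_Suc2)
qed

lemma segment_porous_covers:
  assumes "segment_porous K \<delta> F" "0 < K" "0 < M" "a \<noteq> b" "dist a b / M \<le> \<delta>"
    and X: "X \<subseteq> F \<inter> closed_segment a b"
  shows "\<exists>(I :: nat set) U. finite I \<and> card I \<le> M * (K - 1) ^ n \<and> X \<subseteq> (\<Union>i\<in>I. U i) \<and>
    (\<forall>i\<in>I. bounded (U i) \<and> diameter (U i) \<le> dist a b / real (M * K ^ n))"
proof -
  define N where "N = M * K ^ n"
  have "0 < N"
    using assms(2,3) by (simp add: N_def)
  have "card (pieces_meeting F a b N) \<le> M * (K - 1) ^ n"
    unfolding N_def using assms(1-5) by (rule card_pieces_meeting_le)
  moreover have "X \<subseteq> (\<Union>j\<in>pieces_meeting F a b N. piece a b N j)"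
    using X segment_subset_pieces[OF \<open>0 < N\<close>, of a b] by (fastforce simp: pieces_meeting_def)
  moreover have "\<forall>j\<in>pieces_meeting F a b N. bounded (piece a b N j) \<and> diameter (piece a b N j) \<le> dist a b / N"
    by (simp add: bounded_piece diameter_piece)
  ultimately show ?thesis
    by (intro exI[of _ "pieces_meeting F a b N"] exI[of _ "piece a b N"]) (simp add: N_def)
qed

lemma segment_porous_hausdorff_null:
  fixes F :: "'a::real_normed_vector set"
  assumes por: "segment_porous K \<delta> F" and "2 \<le> K" "0 < \<delta>" "a \<noteq> b"
    and X: "X \<subseteq> F \<inter> closed_segment a b"
  shows "hausdorff_measure (ln (K - 1/2) / ln K) X = 0"
proof -
  define s where "s = ln (K - 1/2) / ln K"
  define l where "l = dist a b"
  define M where "M = nat \<lceil>l / \<delta>\<rceil> + 1"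
  have "0 < M" "l / \<delta> \<le> M"
    unfolding M_def using real_nat_ceiling_ge[of "l / \<delta>"] by auto
  then have "l / M \<le> \<delta>"
    using \<open>0 < \<delta>\<close> by (simp add: field_simps)
  have "0 < s"
    unfolding s_def using \<open>2 \<le> K\<close> by (simp add: divide_pos_pos)
  have r_eq: "l / (M * K ^ n) = l / M * (1 / K) ^ n" for n
    by (simp add: power_one_over)
  have r: "(\<lambda>n. l / (M * K ^ n)) \<longlonglongrightarrow> 0"
    unfolding r_eq using \<open>2 \<le> K\<close> by (intro tendsto_mult_right_zero LIMSEQ_power_zero) simp
  \<comment> \<open>Only \<open>K - 1\<close> of the \<open>K\<close> subpieces survive each refinement; measuring with
    \<open>K powr s = K - 1/2\<close> instead of \<open>K - 1\<close> makes the covering sums decay geometrically.\<close>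
  have cr_eq: "real (M * (K - 1) ^ n) * (l / (M * K ^ n)) powr s =
      M * (l / M) powr s * ((K - 1) / (K - 1/2)) ^ n" for n
  proof -
    have "real K powr s = K - 1/2"
      unfolding s_def powr_def using \<open>2 \<le> K\<close> by simp
    moreover have "(real K ^ n) powr s = (real K powr s) ^ n"
      using \<open>2 \<le> K\<close> by (simp add: powr_realpow[symmetric] powr_powr powr_power mult.commute)
    ultimately have "(l / (M * K ^ n)) powr s = (l / M) powr s / (K - 1/2) ^ n"
      by (simp add: powr_divide flip: divide_divide_eq_left)
    then show ?thesis
      using \<open>2 \<le> K\<close> by (simp add: of_nat_diff power_divide)
  qed
  have cr: "(\<lambda>n. real (M * (K - 1) ^ n) * (l / (M * K ^ n)) powr s) \<longlonglongrightarrow> 0"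
    unfolding cr_eq using \<open>2 \<le> K\<close>
    by (intro tendsto_mult_right_zero LIMSEQ_power_zero) (simp add: divide_less_eq)
  have "\<exists>(I :: nat set) U. finite I \<and> card I \<le> M * (K - 1) ^ n \<and> X \<subseteq> (\<Union>i\<in>I. U i) \<and>
      (\<forall>i\<in>I. bounded (U i) \<and> diameter (U i) \<le> l / (M * K ^ n))" for n
    unfolding l_def using \<open>2 \<le> K\<close> \<open>l / M \<le> \<delta>\<close> X
    by (intro segment_porous_covers[OF por _ \<open>0 < M\<close> \<open>a \<noteq> b\<close>]) (simp_all add: l_def)
  then show ?thesis
    using hausdorff_measure_eq_0_if_covers[OF \<open>0 < s\<close> r cr] unfolding s_def by blast
qed

definition segments_near :: "'a::real_normed_vector set \<Rightarrow> real \<Rightarrow> real \<Rightarrow> real \<Rightarrow> ('a \<times> 'a) set" where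
  "segments_near F \<alpha> \<beta> \<epsilon> =
     {(a, b). \<alpha> \<le> dist a b \<and> dist a b \<le> \<beta> \<and> (\<forall>t\<in>{0..1}. infdist (linepath a b t) F \<le> \<epsilon>)}"

lemma segments_near_mono: "\<epsilon> \<le> \<epsilon>' \<Longrightarrow> segments_near F \<alpha> \<beta> \<epsilon> \<subseteq> segments_near F \<alpha> \<beta> \<epsilon>'"
  unfolding segments_near_def by force

lemma pieces_meeting_imp_segments_near:
  fixes F :: "'a::real_normed_vector set"
  assumes "0 < N" "\<forall>k<N. piece a b N k \<inter> F \<noteq> {}" "\<alpha> \<le> dist a b" "dist a b \<le> \<beta>"
  shows "(a, b) \<in> segments_near F \<alpha> \<beta> (\<beta> / N)"
proof -
  have "infdist (linepath a b t) F \<le> \<beta> / N" if t: "t \<in> {0..1}" for t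
  proof -
    obtain k where "k < N" "linepath a b t \<in> piece a b N k"
      using segment_subset_pieces[OF assms(1)] linepath_in_path[OF t] by blast
    moreover obtain y where "y \<in> piece a b N k" "y \<in> F"
      using assms(2) \<open>k < N\<close> by blast
    ultimately have "dist (linepath a b t) y \<le> dist a b / N"
      using diameter_bounded_bound[OF bounded_piece] diameter_piece order_trans by metis
    also have "\<dots> \<le> \<beta> / N"
      using assms(4) by (simp add: divide_right_mono)
    finally show ?thesis
      using \<open>y \<in> F\<close> by (rule infdist_le2[rotated])
  qed
  then show ?thesis
    using assms(3,4) by (simp add: segments_near_def)
qed

lemma compact_segments_near:
  fixes F :: "'a::euclidean_space set"
  assumes "compact F" "F \<noteq> {}" "0 < \<epsilon>"
  shows "compact (segments_near F \<alpha> \<beta> \<epsilon>)"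
proof -
  have S_eq: "segments_near F \<alpha> \<beta> \<epsilon> =
      {p. \<alpha> \<le> dist (fst p) (snd p)} \<inter> {p. dist (fst p) (snd p) \<le> \<beta>} \<inter>
      (\<Inter>t\<in>{0..1}. {p. infdist (linepath (fst p) (snd p) t) F \<le> \<epsilon>})"
    unfolding segments_near_def by auto
  have "closed (segments_near F \<alpha> \<beta> \<epsilon>)"
    unfolding S_eq linepath_def by (intro closed_Int closed_INT ballI closed_Collect_le continuous_intros)
  moreover have "segments_near F \<alpha> \<beta> \<epsilon> \<subseteq> {x. infdist x F \<le> \<epsilon>} \<times> {x. infdist x F \<le> \<epsilon>}"
  proof
    fix p assume "p \<in> segments_near F \<alpha> \<beta> \<epsilon>"
    then have "infdist (linepath (fst p) (snd p) 0) F \<le> \<epsilon>" "infdist (linepath (fst p) (snd p) 1) F \<le> \<epsilon>"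
      unfolding segments_near_def by auto
    then show "p \<in> {x. infdist x F \<le> \<epsilon>} \<times> {x. infdist x F \<le> \<epsilon>}"
      by (simp add: mem_Times_iff linepath_0' linepath_1')
  qed
  moreover have "compact ({x. infdist x F \<le> \<epsilon>} \<times> {x. infdist x F \<le> \<epsilon>})"
    using assms by (intro compact_Times compact_infdist_le)
  ultimately show ?thesis
    using bounded_subset compact_imp_bounded compact_eq_bounded_closed by blast
qed

lemma closed_segment_subset_if_segments_near:
  assumes "closed F" "F \<noteq> {}" "\<And>\<epsilon>. 0 < \<epsilon> \<Longrightarrow> (a, b) \<in> segments_near F \<alpha> \<beta> \<epsilon>"
  shows "closed_segment a b \<subseteq> F"
  unfolding linepath_image_01[symmetric]
proof clarify
  fix t :: real assume "t \<in> {0..1}"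
  then have "infdist (linepath a b t) F \<le> 0 + \<epsilon>" if "0 < \<epsilon>" for \<epsilon>
    using assms(3)[OF that] unfolding segments_near_def by auto
  then have "infdist (linepath a b t) F \<le> 0"
    by (rule field_le_epsilon)
  then have "infdist (linepath a b t) F = 0"
    by (meson antisym infdist_nonneg)
  then show "linepath a b t \<in> F"
    using in_closed_iff_infdist_zero[OF assms(1,2)] by simp
qed

lemma pieces_miss_if_no_segment:
  fixes F :: "'a::euclidean_space set"
  assumes "compact F" "F \<noteq> {}" "0 < \<alpha>"
    and no_segment: "\<And>a b. closed_segment a b \<subseteq> F \<Longrightarrow> a = b"
  shows "\<exists>K\<ge>2. \<forall>a b. \<alpha> \<le> dist a b \<longrightarrow> dist a b \<le> \<beta> \<longrightarrow> (\<exists>k<K. piece a b K k \<inter> F = {})"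
proof (rule ccontr)
  assume contra: "\<not> ?thesis"
  define S where "S n = segments_near F \<alpha> \<beta> (\<beta> / Suc n)" for n
  have "S n \<noteq> {}" for n
  proof -
    have "\<forall>K\<ge>2. \<exists>a b. \<alpha> \<le> dist a b \<and> dist a b \<le> \<beta> \<and> (\<forall>k<K. piece a b K k \<inter> F \<noteq> {})"
      using contra by blast
    then obtain a b where "\<alpha> \<le> dist a b" "dist a b \<le> \<beta>" "\<forall>k<n + 2. piece a b (n + 2) k \<inter> F \<noteq> {}"
      using le_add2[of 2 n] by blast
    then have "(a, b) \<in> segments_near F \<alpha> \<beta> (\<beta> / (n + 2))"
      by (intro pieces_meeting_imp_segments_near) auto
    moreover have "\<beta> / (n + 2) \<le> \<beta> / Suc n"
      using \<open>0 < \<alpha>\<close> \<open>\<alpha> \<le> dist a b\<close> \<open>dist a b \<le> \<beta>\<close> by (intro divide_left_mono) auto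
    ultimately show ?thesis
      unfolding S_def using segments_near_mono by blast
  qed
  then obtain p where "p \<in> S 0"
    by blast
  then have "0 < \<beta>"
    using \<open>0 < \<alpha>\<close> unfolding S_def segments_near_def by auto
  have "compact (S n)" for n
    unfolding S_def using assms(1,2) \<open>0 < \<beta>\<close> by (intro compact_segments_near) auto
  moreover note \<open>\<And>n. S n \<noteq> {}\<close>
  moreover have "S n \<subseteq> S m" if "m \<le> n" for m n
    unfolding S_def using that \<open>0 < \<beta>\<close> by (intro segments_near_mono divide_left_mono) auto
  ultimately have "\<Inter>(range S) \<noteq> {}"
    by (intro compact_nest)
  then obtain a b where ab: "\<And>n. (a, b) \<in> S n"
    by auto
  have "(a, b) \<in> segments_near F \<alpha> \<beta> \<epsilon>" if "0 < \<epsilon>" for \<epsilon>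
  proof -
    obtain n where "\<beta> / Suc n < \<epsilon>"
      using order_tendstoD(2)[OF LIMSEQ_Suc[OF lim_const_over_n] \<open>0 < \<epsilon>\<close>] eventually_happens' sequentially_bot
      by blast
    then show ?thesis
      using ab[of n] segments_near_mono[of "\<beta> / Suc n" \<epsilon>] unfolding S_def by auto
  qed
  then have "closed_segment a b \<subseteq> F"
    using closed_segment_subset_if_segments_near compact_imp_closed assms(1,2) by blast
  moreover have "a \<noteq> b"
    using ab[of 0] \<open>0 < \<alpha>\<close> by (auto simp: S_def segments_near_def)
  ultimately show False
    using no_segment by blast
qed

section \<open>Attractors under the strong separation condition\<close>

locale ssc_ifs =
  fixes m :: nat and \<phi> :: "nat \<Rightarrow> 'a::euclidean_space \<Rightarrow> 'a" and F :: "'a set"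
  assumes m_pos: "1 \<le> m"
    and contracting: "\<forall>i<m. contracting_similarity (\<phi> i)"
    and attractor: "self_similar_set m \<phi> F"
    and separated: "SSC m \<phi> F"
begin

lemma F_nonempty: "F \<noteq> {}" and compact_F: "compact F" and F_eq: "F = (\<Union>i<m. \<phi> i ` F)"
  using attractor by (simp_all add: self_similar_set_def)

lemma cylinders_disjoint: "i < m \<Longrightarrow> j < m \<Longrightarrow> i \<noteq> j \<Longrightarrow> \<phi> i ` F \<inter> \<phi> j ` F = {}"
  using separated by (simp add: SSC_def)

lemma cylinder_subset: "i < m \<Longrightarrow> \<phi> i ` F \<subseteq> F"
  using F_eq by blast

definition ratio :: "nat \<Rightarrow> real" where
  "ratio i = (SOME r. 0 < r \<and> r < 1 \<and> (\<forall>x y. dist (\<phi> i x) (\<phi> i y) = r * dist x y))"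

lemma
  assumes "i < m"
  shows ratio_pos: "0 < ratio i" and ratio_less_1: "ratio i < 1"
    and dist_phi: "dist (\<phi> i x) (\<phi> i y) = ratio i * dist x y"
proof -
  have "\<exists>r. 0 < r \<and> r < 1 \<and> (\<forall>x y. dist (\<phi> i x) (\<phi> i y) = r * dist x y)"
    using contracting assms unfolding contracting_similarity_def by blast
  from someI_ex[OF this] show "0 < ratio i" "ratio i < 1" "dist (\<phi> i x) (\<phi> i y) = ratio i * dist x y"
    unfolding ratio_def by blast+
qed

lemma continuous_on_phi: "i < m \<Longrightarrow> continuous_on S (\<phi> i)"
  by (rule lipschitz_on_continuous_on, rule lipschitz_onI[where L = "ratio i"])
    (auto simp: dist_phi ratio_pos less_imp_le)

lemma compact_cylinder: "i < m \<Longrightarrow> compact (\<phi> i ` F)"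
  using compact_F by (intro compact_continuous_image continuous_on_phi)

definition ratio_min :: real where "ratio_min = Min (ratio ` {..<m})"
definition ratio_max :: real where "ratio_max = Max (ratio ` {..<m})"

lemma ratio_min_le: "i < m \<Longrightarrow> ratio_min \<le> ratio i"
  and ratio_le_max: "i < m \<Longrightarrow> ratio i \<le> ratio_max"
  unfolding ratio_min_def ratio_max_def by simp_all

lemma ratio_min_pos: "0 < ratio_min"
  and ratio_max_pos: "0 < ratio_max" and ratio_max_less_1: "ratio_max < 1"
proof -
  have "0 \<in> {..<m}"
    using m_pos by simp
  then have "ratio ` {..<m} \<noteq> {}"
    by blast
  then show "0 < ratio_min" "ratio_max < 1"
    unfolding ratio_min_def ratio_max_def by (simp_all add: ratio_pos ratio_less_1)
  show "0 < ratio_max"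
    using ratio_pos[of 0] ratio_le_max[of 0] m_pos by simp
qed

fun word_map :: "nat list \<Rightarrow> 'a \<Rightarrow> 'a" where
  "word_map [] = id"
| "word_map (i # w) = \<phi> i \<circ> word_map w"

fun word_ratio :: "nat list \<Rightarrow> real" where
  "word_ratio [] = 1"
| "word_ratio (i # w) = ratio i * word_ratio w"

lemma word_map_snoc: "word_map (w @ [i]) = word_map w \<circ> \<phi> i"
  by (induction w) auto

lemma word_ratio_snoc: "word_ratio (w @ [i]) = word_ratio w * ratio i"
  by (induction w) auto

lemma dist_word_map:
  "w \<in> lists {..<m} \<Longrightarrow> dist (word_map w x) (word_map w y) = word_ratio w * dist x y"
  by (induction w arbitrary: x y) (auto simp: dist_phi)

lemma word_ratio_pos: "w \<in> lists {..<m} \<Longrightarrow> 0 < word_ratio w"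
  by (induction w) (auto simp: ratio_pos)

lemma word_ratio_le_power: "w \<in> lists {..<m} \<Longrightarrow> word_ratio w \<le> ratio_max ^ length w"
proof (induction w)
  case (Cons i w)
  then show ?case
    using ratio_le_max[of i] ratio_pos[of i] word_ratio_pos[of w] by (auto intro!: mult_mono)
qed simp

lemma word_ratio_le_1: "w \<in> lists {..<m} \<Longrightarrow> word_ratio w \<le> 1"
  using word_ratio_le_power[of w] ratio_max_pos ratio_max_less_1
  by (meson less_imp_le order_trans power_le_one)

lemma word_cylinder_subset: "w \<in> lists {..<m} \<Longrightarrow> word_map w ` F \<subseteq> F"
proof (induction w)
  case (Cons i w)
  then have "word_map (i # w) ` F \<subseteq> \<phi> i ` F"
    by (auto simp: image_comp[symmetric])
  then show ?case
    using cylinder_subset Cons.prems by auto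
qed simp

lemma cylinder_gap:
  obtains d where "0 < d"
    "\<forall>i<m. \<forall>j<m. i \<noteq> j \<longrightarrow> (\<forall>x\<in>\<phi> i ` F. \<forall>y\<in>\<phi> j ` F. d \<le> dist x y)"
proof -
  define P where "P = {(i, j). i < m \<and> j < m \<and> i \<noteq> j}"
  \<comment> \<open>The extra 1 keeps the minimum defined when \<open>m = 1\<close> and \<open>P\<close> is empty.\<close>
  define d where "d = Min (insert 1 ((\<lambda>(i, j). setdist (\<phi> i ` F) (\<phi> j ` F)) ` P))"
  have "finite P"
    by (rule finite_subset[of _ "{..<m} \<times> {..<m}"]) (auto simp: P_def)
  have "0 < setdist (\<phi> i ` F) (\<phi> j ` F)" if "(i, j) \<in> P" for i j
    using that F_nonempty cylinders_disjoint[of i j] unfolding P_def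
    by (simp add: setdist_gt_0_compact_closed compact_cylinder compact_imp_closed)
  then have "0 < d"
    unfolding d_def using \<open>finite P\<close> by (auto simp: Min_gr_iff)
  moreover have "d \<le> dist x y"
    if "i < m" "j < m" "i \<noteq> j" "x \<in> \<phi> i ` F" "y \<in> \<phi> j ` F" for i j x y
  proof -
    have "d \<le> setdist (\<phi> i ` F) (\<phi> j ` F)"
      unfolding d_def using \<open>finite P\<close> that(1-3) by (intro Min_le) (auto simp: P_def)
    also have "\<dots> \<le> dist x y"
      using that(4,5) by (rule setdist_le_dist)
    finally show ?thesis .
  qed
  ultimately show ?thesis
    using that by blast
qed

lemma cylinder_separation:
  assumes d: "0 < d"
    "\<forall>i<m. \<forall>j<m. i \<noteq> j \<longrightarrow> (\<forall>x\<in>\<phi> i ` F. \<forall>y\<in>\<phi> j ` F. d \<le> dist x y)"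
    and w: "w \<in> lists {..<m}" and x: "x \<in> word_map w ` F" and y: "y \<in> F" "y \<notin> word_map w ` F"
  shows "d * word_ratio w \<le> dist x y"
  using w x y
proof (induction w arbitrary: x y)
  case (Cons i w)
  then have "i < m" "w \<in> lists {..<m}"
    by auto
  from \<open>x \<in> word_map (i # w) ` F\<close> obtain x' where x': "x' \<in> word_map w ` F" "x = \<phi> i x'"
    by auto
  from \<open>y \<in> F\<close> F_eq obtain j y' where y': "j < m" "y' \<in> F" "y = \<phi> j y'"
    by blast
  show ?case
  proof (cases "j = i")
    case True
    then have "y' \<notin> word_map w ` F"
      using \<open>y \<notin> word_map (i # w) ` F\<close> y' by (auto simp: image_comp[symmetric])
    then have "d * word_ratio w \<le> dist x' y'"
      using Cons.IH[OF x'(1) y'(2)] by blast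
    then show ?thesis
      using ratio_pos[OF \<open>i < m\<close>] x' y' True by (simp add: dist_phi[OF \<open>i < m\<close>])
  next
    case False
    have "x \<in> \<phi> i ` F"
      using x' word_cylinder_subset[OF \<open>w \<in> lists {..<m}\<close>] by auto
    then have "d \<le> dist x y"
      using d(2) \<open>i < m\<close> \<open>j < m\<close> False y' by auto
    moreover have "word_ratio (i # w) \<le> 1"
      using \<open>i < m\<close> \<open>w \<in> lists {..<m}\<close> by (intro word_ratio_le_1) simp
    ultimately show ?thesis
      using \<open>0 < d\<close> by (meson less_imp_le mult_left_le order_trans)
  qed
qed simp

lemma cylinder_at_scale:
  assumes "x \<in> F" "0 < t" "t \<le> 1"
  obtains w where "w \<in> lists {..<m}" "x \<in> word_map w ` F" "t \<le> word_ratio w" "word_ratio w * ratio_min < t"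
proof -
  define Q where "Q w \<longleftrightarrow> w \<in> lists {..<m} \<and> x \<in> word_map w ` F \<and> t \<le> word_ratio w" for w
  obtain N where N: "ratio_max ^ N < t"
    using real_arch_pow_inv[OF \<open>0 < t\<close> ratio_max_less_1] by blast
  have "length w \<le> N" if "Q w" for w
  proof (rule ccontr)
    assume "\<not> length w \<le> N"
    then have "ratio_max ^ length w \<le> ratio_max ^ N"
      using ratio_max_pos ratio_max_less_1 by (intro power_decreasing) auto
    then show False
      using that word_ratio_le_power[of w] N unfolding Q_def by linarith
  qed
  moreover have "Q []"
    using assms unfolding Q_def by auto
  ultimately obtain w where w: "Q w" and longest: "\<And>v. Q v \<Longrightarrow> length v \<le> length w"
    using Lattices_Big.ex_has_greatest_nat[of Q "[]" length "Suc N"] by (metis less_Suc_eq_le)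
  then obtain y where "y \<in> F" "x = word_map w y"
    unfolding Q_def by auto
  moreover from \<open>y \<in> F\<close> F_eq obtain i z where "i < m" "z \<in> F" "y = \<phi> i z"
    by blast
  ultimately have iz: "i < m" "z \<in> F" "x = word_map (w @ [i]) z"
    by (simp_all add: word_map_snoc)
  have "\<not> Q (w @ [i])"
    using longest[of "w @ [i]"] by auto
  then have "word_ratio w * ratio i < t"
    using w iz unfolding Q_def by (auto simp: word_ratio_snoc)
  moreover have "word_ratio w * ratio_min \<le> word_ratio w * ratio i"
    using ratio_min_le[OF \<open>i < m\<close>] word_ratio_pos[of w] w unfolding Q_def by simp
  ultimately have "word_ratio w * ratio_min < t"
    by linarith
  with w show ?thesis
    unfolding Q_def using that by blast
qed


lemma connected_subset_cylinder:
  assumes "connected C" "C \<subseteq> F" "i < m" "x \<in> C" "x \<in> \<phi> i ` F"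
  shows "C \<subseteq> \<phi> i ` F"
proof -
  define B where "B = (\<Union>j\<in>{..<m} - {i}. \<phi> j ` F)"
  have "closed B"
    unfolding B_def by (intro closed_UN) (auto intro: compact_imp_closed compact_cylinder)
  moreover have "closed (\<phi> i ` F)"
    using compact_cylinder[OF \<open>i < m\<close>] by (rule compact_imp_closed)
  moreover have "\<phi> i ` F \<inter> B = {}"
    unfolding B_def using cylinders_disjoint \<open>i < m\<close> by auto
  moreover have "C \<subseteq> \<phi> i ` F \<union> B"
    using \<open>C \<subseteq> F\<close> F_eq unfolding B_def by blast
  ultimately have "B \<inter> C = {}"
    using \<open>connected C\<close> assms(4,5) unfolding connected_closed by blast
  then show ?thesis
    using \<open>C \<subseteq> \<phi> i ` F \<union> B\<close> by blast
qed

lemma connected_subset_dist_le: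
  assumes "connected C" "C \<subseteq> F" "x \<in> C" "y \<in> C"
  shows "dist x y \<le> ratio_max ^ n * diameter F"
  using assms
proof (induction n arbitrary: C x y)
  case 0
  then show ?case
    using diameter_bounded_bound[OF compact_imp_bounded[OF compact_F]] by auto
next
  case (Suc n)
  obtain i where "i < m" "x \<in> \<phi> i ` F"
    using Suc.prems F_eq by blast
  then have C: "C \<subseteq> \<phi> i ` F"
    using connected_subset_cylinder Suc.prems by blast
  define g where "g = inv_into F (\<phi> i)"
  have "inj_on (\<phi> i) F"
    using similarity_inj[OF ratio_pos dist_phi] \<open>i < m\<close> by (blast intro: inj_on_subset)
  then have "continuous_on (\<phi> i ` F) g"
    unfolding g_def using continuous_on_phi[OF \<open>i < m\<close>] compact_F by (intro continuous_on_inv) auto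
  then have "connected (g ` C)"
    using C \<open>connected C\<close> by (blast intro: connected_continuous_image continuous_on_subset)
  moreover have "g ` C \<subseteq> F"
    unfolding g_def using C by (auto intro: inv_into_into)
  moreover have "\<phi> i (g x) = x" "\<phi> i (g y) = y"
    unfolding g_def using C Suc.prems(3,4) by (auto intro: f_inv_into_f)
  ultimately have "dist x y \<le> ratio i * (ratio_max ^ n * diameter F)"
    using Suc.IH[of "g ` C" "g x" "g y"] Suc.prems(3,4) dist_phi[OF \<open>i < m\<close>, of "g x" "g y"]
      ratio_pos[OF \<open>i < m\<close>] by (metis imageI mult_left_mono less_imp_le)
  also have "\<dots> \<le> ratio_max * (ratio_max ^ n * diameter F)"
    using ratio_le_max[OF \<open>i < m\<close>] diameter_ge_0[OF compact_imp_bounded[OF compact_F]]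
      ratio_max_pos by (intro mult_right_mono) auto
  finally show ?case
    by simp
qed

lemma F_contains_no_segment:
  assumes "closed_segment a b \<subseteq> F"
  shows "a = b"
proof -
  have "(\<lambda>n. ratio_max ^ n * diameter F) \<longlonglongrightarrow> 0"
    using ratio_max_pos ratio_max_less_1 by (intro tendsto_mult_left_zero LIMSEQ_power_zero) auto
  moreover have "dist a b \<le> ratio_max ^ n * diameter F" for n
    using assms by (intro connected_subset_dist_le) auto
  ultimately have "dist a b \<le> 0"
    by (intro LIMSEQ_le_const) auto
  then show ?thesis
    by simp
qed

lemma piece_disjoint_rescale:
  assumes "w \<in> lists {..<m}" "k < K" "piece a b K k \<inter> F = {}"
    and "closed_segment (word_map w a) (word_map w b) \<inter> F \<subseteq> word_map w ` F"
  shows "piece (word_map w a) (word_map w b) K k \<inter> F = {}"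
proof -
  have sim: "\<And>x y. dist (word_map w x) (word_map w y) = word_ratio w * dist x y"
    using dist_word_map[OF assms(1)] .
  have "piece (word_map w a) (word_map w b) K k \<inter> F \<subseteq> word_map w ` F"
    using piece_subset_segment[OF assms(2), of "word_map w a" "word_map w b"] assms(4) by blast
  then have "piece (word_map w a) (word_map w b) K k \<inter> F \<subseteq> word_map w ` piece a b K k \<inter> word_map w ` F"
    by (auto simp: similarity_image_piece[OF sim])
  also have "\<dots> = word_map w ` (piece a b K k \<inter> F)"
    using similarity_inj[OF word_ratio_pos[OF assms(1)] sim] by (simp add: image_Int)
  finally show ?thesis
    using assms(3) by simp
qed

lemma segment_inter_subset_cylinder:
  assumes d: "0 < d"
    "\<forall>i<m. \<forall>j<m. i \<noteq> j \<longrightarrow> (\<forall>x\<in>\<phi> i ` F. \<forall>y\<in>\<phi> j ` F. d \<le> dist x y)"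
    and "w \<in> lists {..<m}" "x \<in> closed_segment a b" "x \<in> word_map w ` F"
    and "dist a b < d * word_ratio w"
  shows "closed_segment a b \<inter> F \<subseteq> word_map w ` F"
proof
  fix y assume y: "y \<in> closed_segment a b \<inter> F"
  show "y \<in> word_map w ` F"
  proof (rule ccontr)
    assume "y \<notin> word_map w ` F"
    then have "d * word_ratio w \<le> dist x y"
      using cylinder_separation[OF d assms(3,5)] y by blast
    also have "\<dots> \<le> dist a b"
      using assms(4) y by (blast intro: dist_in_closed_segment_le)
    finally show False
      using assms(6) by simp
  qed
qed

lemma segment_porous_from_one_scale:
  assumes d: "0 < d"
    "\<forall>i<m. \<forall>j<m. i \<noteq> j \<longrightarrow> (\<forall>x\<in>\<phi> i ` F. \<forall>y\<in>\<phi> j ` F. d \<le> dist x y)"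
    and "0 < K"
    and K: "\<And>a b. ratio_min * d / 2 \<le> dist a b \<Longrightarrow> dist a b \<le> d / 2 \<Longrightarrow> \<exists>k<K. piece a b K k \<inter> F = {}"
  shows "segment_porous K (d / 2) F"
  unfolding segment_porous_def
proof (intro allI impI)
  fix a b :: 'a assume ab: "0 < dist a b" "dist a b \<le> d / 2"
  show "\<exists>k<K. piece a b K k \<inter> F = {}"
  proof (cases "closed_segment a b \<inter> F = {}")
    case True
    then have "piece a b K 0 \<inter> F = {}"
      using piece_subset_segment[OF \<open>0 < K\<close>, of a b] by auto
    then show ?thesis
      using \<open>0 < K\<close> by (intro exI[of _ 0]) simp
  next
    case False
    then obtain x where x: "x \<in> closed_segment a b" "x \<in> F"
      by blast
    define t where "t = 2 * dist a b / d"
    have "0 < t" "t \<le> 1"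
      using ab d(1) by (auto simp: t_def field_simps)
    then obtain w where w: "w \<in> lists {..<m}" "x \<in> word_map w ` F" "t \<le> word_ratio w"
        "word_ratio w * ratio_min < t"
      using cylinder_at_scale[OF x(2)] by blast
    have "0 < word_ratio w"
      using w(1) by (rule word_ratio_pos)
    have sim: "\<And>x y. dist (word_map w x) (word_map w y) = word_ratio w * dist x y"
      using dist_word_map[OF w(1)] .
    obtain a' b' where a'b': "a = word_map w a'" "b = word_map w b'"
      using similarity_surj[OF \<open>0 < word_ratio w\<close> sim] by (metis surjD)
    have "2 * dist a b \<le> d * word_ratio w"
      using w(3) d(1) unfolding t_def by (simp add: field_simps)
    moreover have "0 < d * word_ratio w"
      using d(1) \<open>0 < word_ratio w\<close> by simp
    ultimately have "dist a b < d * word_ratio w"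
      by linarith
    then have "closed_segment a b \<inter> F \<subseteq> word_map w ` F"
      using segment_inter_subset_cylinder[OF d w(1) x(1) w(2)] by blast
    moreover have "dist a b = word_ratio w * dist a' b'"
      unfolding a'b' by (rule sim)
    then have "ratio_min * d / 2 \<le> dist a' b'" "dist a' b' \<le> d / 2"
      using w(3,4) d(1) \<open>0 < word_ratio w\<close> unfolding t_def by (simp_all add: field_simps)
    then obtain k where "k < K" "piece a' b' K k \<inter> F = {}"
      using K by blast
    ultimately show ?thesis
      unfolding a'b' using piece_disjoint_rescale[OF w(1)] by blast
  qed
qed

lemma segment_porous_F:
  obtains K \<delta> where "2 \<le> K" "0 < \<delta>" "segment_porous K \<delta> F"
proof -
  obtain d where d: "0 < d"
    "\<forall>i<m. \<forall>j<m. i \<noteq> j \<longrightarrow> (\<forall>x\<in>\<phi> i ` F. \<forall>y\<in>\<phi> j ` F. d \<le> dist x y)"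
    using cylinder_gap by blast
  obtain K where K: "2 \<le> K"
    "\<And>a b. ratio_min * d / 2 \<le> dist a b \<Longrightarrow> dist a b \<le> d / 2 \<Longrightarrow> \<exists>k<K. piece a b K k \<inter> F = {}"
    using pieces_miss_if_no_segment[OF compact_F F_nonempty _ F_contains_no_segment] ratio_min_pos d(1)
    by (metis half_gt_zero zero_less_mult_iff)
  have "segment_porous K (d / 2) F"
    using K(1) by (intro segment_porous_from_one_scale[OF d _ K(2)]) simp
  moreover have "0 < d / 2"
    using d(1) by simp
  ultimately show ?thesis
    using that K(1) by blast
qed

lemma hausdorff_dim_inter_line_less_1:
  assumes "affine_line L"
  shows "hausdorff_dim (F \<inter> L) < 1"
proof -
  obtain K \<delta> where K: "2 \<le> K" "0 < \<delta>" "segment_porous K \<delta> F"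
    using segment_porous_F by blast
  obtain a b where "a \<noteq> b" "F \<inter> L \<subseteq> closed_segment a b"
    using bounded_inter_affine_line_subset_segment[OF compact_imp_bounded[OF compact_F] assms] by blast
  define s where "s = ln (K - 1/2) / ln K"
  have "hausdorff_measure s (F \<inter> L) = 0"
    unfolding s_def using segment_porous_hausdorff_null[OF K(3,1,2) \<open>a \<noteq> b\<close>] \<open>F \<inter> L \<subseteq> _\<close> by blast
  moreover have "0 \<le> s" "s < 1"
    unfolding s_def using K(1) by (simp_all add: divide_less_eq)
  ultimately show ?thesis
    using hausdorff_dim_le by fastforce
qed

end

theorem corollary3p2:
  fixes m :: nat and \<phi> :: "nat \<Rightarrow> real^2 \<Rightarrow> real^2" and F :: "(real^2) set"
  assumes "m \<ge> 1"
    and "\<forall>i<m. contracting_similarity (\<phi> i)"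
    and "self_similar_set m \<phi> F"
    and "SSC m \<phi> F"
  shows "\<forall>L. affine_line L \<longrightarrow> hausdorff_dim (F \<inter> L) < 1"
proof -
  interpret ssc_ifs m \<phi> F
    using assms by unfold_locales
  show ?thesis
    using hausdorff_dim_inter_line_less_1 by blast
qed

end
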